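(* Let $F$ be a distribution function on $\mathbb{R}$ satisfying (A1), with median $\theta = F^{-1}(1/2)$, let $0 \le \varepsilon < 1/2$, let $n \ge 1$, and let $k$ be an integer with $0 \le k$ and $k+1 \le n-k$. For $G \in \mathcal{F}_\varepsilon(F)$ let $X_n = (x_1,\dots,x_n)$ be an i.i.d. sample from $G$ with order statistics $x_{(1)} \le \dots \le x_{(n)}$. Then: (a) $$\inf_{G \in \mathcal{F}_\varepsilon(F)} P_G\big(x_{(k+1)} \le \theta < x_{(n-k)}\big) = 1 - \alpha^*(n,k,\varepsilon).$$ (b) The infimum in (a) is attained by $G = (1-\varepsilon)F + \varepsilon H$ for any distribution $H$ that places all its mass to the left of $\theta$ (i.e. $H((-\infty,\theta]) = 1$) or all its mass to the right of $\theta$ (i.e. $H((\theta,\infty)) = 1$).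
   Context: Assumption (A1): $F$ is a continuous distribution function with a unique median $\theta(F) = F^{-1}(1/2)$. For $0 \le \varepsilon < 1/2$, the contamination neighborhood of $F$ is $\mathcal{F}_\varepsilon(F) = \{G : G = (1-\varepsilon)F + \varepsilon H,\ H \text{ an arbitrary distribution on } \mathbb{R}\}$. For integers $n \ge 1$, $k \ge 0$ and $0 \le \varepsilon < 1/2$, define $\alpha^*(n,k,\varepsilon) = 1 - P(k < Z_n < n-k)$, where $Z_n \sim \mathrm{Binomial}(n,(1-\varepsilon)/2)$. *)

theory Defs
  imports "HOL-Probability.Probability"
begin

definition is_mixture :: "real \<Rightarrow> real measure \<Rightarrow> real measure \<Rightarrow> real measure \<Rightarrow> bool" where
  "is_mixture eps F H G \<longleftrightarrow> real_distribution G \<and>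
     (\<forall>A\<in>sets borel. measure G A = (1 - eps) * measure F A + eps * measure H A)"

definition contam_nbhd :: "real \<Rightarrow> real measure \<Rightarrow> real measure set" where
  "contam_nbhd eps F = {G. \<exists>H. real_distribution H \<and> is_mixture eps F H G}"

text \<open>j-th order statistic (1-indexed) of the sample x 0, ..., x (n-1).\<close>
definition order_stat :: "nat \<Rightarrow> nat \<Rightarrow> (nat \<Rightarrow> real) \<Rightarrow> real" where
  "order_stat n j x = sort (map x [0..<n]) ! (j - 1)"

definition coverage :: "nat \<Rightarrow> nat \<Rightarrow> real \<Rightarrow> real measure \<Rightarrow> real" where
  "coverage n k theta G = measure (PiM {..<n} (\<lambda>_. G))
     {x \<in> space (PiM {..<n} (\<lambda>_. G)). order_stat n (k+1) x \<le> theta \<and> theta < order_stat n (n-k) x}"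

definition alpha_star :: "nat \<Rightarrow> nat \<Rightarrow> real \<Rightarrow> real" where
  "alpha_star n k eps = 1 - measure_pmf.prob (binomial_pmf n ((1 - eps) / 2)) {z. k < z \<and> z < n - k}"

end

theory Submission
  imports Defs "HOL-Analysis.Weierstrass_Theorems"
begin

text \<open>The event \<open>x_(k+1) \<le> \<theta> < x_(n-k)\<close> says that the number of observations \<open>\<le> \<theta>\<close> lies
  strictly between \<open>k\<close> and \<open>n - k\<close>, and for an i.i.d. sample from \<open>G\<close> that number is
  \<open>Binomial(n, p)\<close> with \<open>p = G(-\<infinity>, \<theta>]\<close>. For \<open>G = (1 - \<epsilon>) F + \<epsilon> H\<close> one has
  \<open>p = (1 - \<epsilon>)/2 + \<epsilon> H(-\<infinity>, \<theta>]\<close>, which ranges over \<open>[(1 - \<epsilon>)/2, (1 + \<epsilon>)/2]\<close>.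
  The central binomial probability \<open>P(k < Z < n - k)\<close> is invariant under \<open>p \<mapsto> 1 - p\<close> and
  nondecreasing on \<open>[0, 1/2]\<close>, because its derivative telescopes to a difference of two
  Bernstein polynomials that is nonnegative there. So it is smallest at the endpoints of the
  interval, which are reached exactly when \<open>H\<close> puts all its mass on one side of \<open>\<theta>\<close>.\<close>

lemma has_real_derivative_Bernstein_Suc:
  assumes "i < N"
  shows "(Bernstein (Suc N) (Suc i) has_real_derivative
           real (Suc N) * (Bernstein N i p - Bernstein N (Suc i) p)) (at p)"
proof -
  define d where "d = N - Suc i"
  have d: "N - i = Suc d" "Suc N - Suc i = Suc d" using assms by (simp_all add: d_def)
  define C where "C = real (Suc N choose Suc i)"
  have c1: "C * Suc i = Suc N * real (N choose i)"
    unfolding C_def by (metis Suc_times_binomial_eq of_nat_mult)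
  have c2: "C * Suc d = Suc N * real (N choose Suc i)"
    using binomial_absorb_comp[of "Suc N" "Suc i"] d
    unfolding C_def by (metis diff_Suc_1 mult.commute of_nat_mult)
  have "((\<lambda>p. C * p ^ Suc i * (1 - p) ^ Suc d) has_real_derivative
          C * (Suc i * p ^ i) * (1 - p) ^ Suc d - C * p ^ Suc i * (Suc d * (1 - p) ^ d)) (at p)"
    by (rule derivative_eq_intros refl | simp)+
  moreover have "C * (Suc i * p ^ i) * (1 - p) ^ Suc d - C * p ^ Suc i * (Suc d * (1 - p) ^ d)
      = (C * Suc i) * (p ^ i * (1 - p) ^ Suc d) - (C * Suc d) * (p ^ Suc i * (1 - p) ^ d)"
    by (simp only: ac_simps)
  also have "\<dots> = real (Suc N) * (Bernstein N i p - Bernstein N (Suc i) p)"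
    unfolding c1 c2 Bernstein_def d_def[symmetric] d by (simp add: algebra_simps)
  ultimately show ?thesis
    unfolding Bernstein_def[abs_def] d C_def by simp
qed

lemma Bernstein_reflect_le:
  assumes "2 * k \<le> N" "0 \<le> x" "x \<le> 1/2"
  shows "Bernstein N (N - k) x \<le> Bernstein N k x"
proof -
  have "Bernstein N k x - Bernstein N (N - k) x
      = real (N choose k) * x ^ k * (1 - x) ^ k * ((1 - x) ^ (N - 2 * k) - x ^ (N - 2 * k))"
  proof -
    have c: "N choose (N - k) = N choose k" using assms by (intro binomial_symmetric[symmetric]) simp
    have e: "N - (N - k) = k" "N - k = k + (N - 2 * k)" using assms by simp_all
    show ?thesis
      unfolding Bernstein_def c e(1) unfolding e(2) power_add
      by (simp only: right_diff_distrib mult_ac)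
  qed
  moreover have "x ^ (N - 2 * k) \<le> (1 - x) ^ (N - 2 * k)"
    using assms by (intro power_mono) auto
  then have "0 \<le> real (N choose k) * x ^ k * (1 - x) ^ k * ((1 - x) ^ (N - 2 * k) - x ^ (N - 2 * k))"
    using assms by (intro mult_nonneg_nonneg) auto
  ultimately show ?thesis by linarith
qed

definition central_binomial_prob :: "nat \<Rightarrow> nat \<Rightarrow> real \<Rightarrow> real" where
  "central_binomial_prob n k p = (\<Sum>j\<in>{k<..<n-k}. Bernstein n j p)"

lemma prob_binomial_pmf_central:
  assumes "0 \<le> p" "p \<le> 1"
  shows "measure_pmf.prob (binomial_pmf n p) {z. k < z \<and> z < n - k} = central_binomial_prob n k p"
proof -
  have "{z. k < z \<and> z < n - k} = {k<..<n-k}" by auto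
  then show ?thesis
    using assms by (simp add: measure_measure_pmf_finite central_binomial_prob_def Bernstein_def)
qed

lemma central_binomial_prob_reflect: "central_binomial_prob n k (1 - p) = central_binomial_prob n k p"
  unfolding central_binomial_prob_def Bernstein_def
  by (rule sum.reindex_bij_witness[where i="\<lambda>j. n - j" and j="\<lambda>j. n - j"])
     (auto simp: binomial_symmetric[of _ n, symmetric])

lemma has_real_derivative_central_binomial_prob:
  assumes "2 * k < Suc N"
  shows "(central_binomial_prob (Suc N) k has_real_derivative
           real (Suc N) * (Bernstein N k p - Bernstein N (N - k) p)) (at p)"
proof -
  have "central_binomial_prob (Suc N) k = (\<lambda>p. \<Sum>i\<in>{k..<N-k}. Bernstein (Suc N) (Suc i) p)"
  proof -
    have "{k<..<Suc N - k} = {Suc k..<Suc (N - k)}"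
      using assms by auto
    then show ?thesis
      unfolding central_binomial_prob_def by (simp only: sum.shift_bounds_Suc_ivl)
  qed
  moreover have "(\<Sum>i\<in>{k..<N-k}. real (Suc N) * (Bernstein N i p - Bernstein N (Suc i) p))
      = real (Suc N) * (Bernstein N k p - Bernstein N (N - k) p)"
  proof -
    have "k \<le> N - k" using assms by simp
    from sum_Suc_diff'[OF this, of "\<lambda>i. Bernstein N i p"]
    have "(\<Sum>i\<in>{k..<N-k}. Bernstein N i p - Bernstein N (Suc i) p) = Bernstein N k p - Bernstein N (N - k) p"
      by (simp add: sum_subtractf)
    then show ?thesis by (simp add: sum_distrib_left[symmetric])
  qed
  moreover have "((\<lambda>p. \<Sum>i\<in>{k..<N-k}. Bernstein (Suc N) (Suc i) p) has_real_derivative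
      (\<Sum>i\<in>{k..<N-k}. real (Suc N) * (Bernstein N i p - Bernstein N (Suc i) p))) (at p)"
    by (intro DERIV_sum has_real_derivative_Bernstein_Suc) auto
  ultimately show ?thesis by simp
qed

lemma central_binomial_prob_mono:
  assumes "2 * k < n" "0 \<le> q" "q \<le> p" "p \<le> 1/2"
  shows "central_binomial_prob n k q \<le> central_binomial_prob n k p"
proof -
  obtain N where N: "n = Suc N" using assms(1) by (cases n) auto
  show ?thesis
    unfolding N
  proof (rule DERIV_nonneg_imp_nondecreasing[OF assms(3)])
    fix x assume "q \<le> x" "x \<le> p"
    then have "Bernstein N (N - k) x \<le> Bernstein N k x"
      using assms N by (intro Bernstein_reflect_le) auto
    then show "\<exists>y. (central_binomial_prob (Suc N) k has_real_derivative y) (at x) \<and> 0 \<le> y"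
      using has_real_derivative_central_binomial_prob assms N by fastforce
  qed
qed

lemma central_binomial_prob_le:
  assumes "2 * k < n" "0 \<le> q" "q \<le> p" "p \<le> 1 - q"
  shows "central_binomial_prob n k q \<le> central_binomial_prob n k p"
proof (cases "p \<le> 1/2")
  case True
  then show ?thesis using assms central_binomial_prob_mono by blast
next
  case False
  then have "central_binomial_prob n k q \<le> central_binomial_prob n k (1 - p)"
    using assms by (intro central_binomial_prob_mono) auto
  then show ?thesis by (simp only: central_binomial_prob_reflect)
qed

lemma sorted_nth_le_iff:
  fixes xs :: "'a::linorder list"
  assumes "sorted xs" "i < length xs"
  shows "xs ! i \<le> t \<longleftrightarrow> i < length (filter (\<lambda>y. y \<le> t) xs)"
  using assms
proof (induction xs arbitrary: i)
  case (Cons a xs)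
  show ?case
  proof (cases "a \<le> t")
    case True
    with Cons show ?thesis by (cases i) auto
  next
    case False
    with Cons.prems have "\<forall>y\<in>set (a # xs). \<not> y \<le> t"
      by (auto intro: order_trans)
    then have "filter (\<lambda>y. y \<le> t) (a # xs) = []" "\<not> (a # xs) ! i \<le> t"
      using nth_mem[OF Cons.prems(2)] by (simp_all only: filter_empty_conv) blast
    then show ?thesis by simp
  qed
qed simp

lemma length_filter_sort_map:
  "length (filter P (sort (map x [0..<n]))) = card {i\<in>{..<n}. P (x i)}"
proof -
  have "length (filter P (sort (map x [0..<n]))) = length (filter P (map x [0..<n]))"
    by (metis mset_filter mset_sort size_mset)
  also have "\<dots> = card {i\<in>{..<n}. P (x i)}"
    by (auto simp: length_filter_conv_card intro!: arg_cong[where f=card])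
  finally show ?thesis .
qed

lemma order_stat_le_iff:
  fixes x :: "nat \<Rightarrow> real"
  assumes "1 \<le> j" "j \<le> n"
  shows "order_stat n j x \<le> t \<longleftrightarrow> j \<le> card {i\<in>{..<n}. x i \<le> t}"
proof -
  have "order_stat n j x \<le> t \<longleftrightarrow> j - 1 < card {i\<in>{..<n}. x i \<le> t}"
    using sorted_nth_le_iff[of "sort (map x [0..<n])" "j - 1" t] assms
    unfolding order_stat_def length_filter_sort_map by simp
  then show ?thesis using assms by linarith
qed

lemma (in prob_space) distr_indicator_bernoulli:
  assumes "A \<in> events"
  shows "distr M (bernoulli_pmf (prob A)) (\<lambda>x. x \<in> A) = measure_pmf (bernoulli_pmf (prob A))"
proof (rule measure_eqI_countable[where A=UNIV])
  fix b :: bool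
  have "(\<lambda>x. x \<in> A) -` {b} \<inter> space M = (if b then A else space M - A)"
    using sets.sets_into_space[OF assms] by auto
  then show "emeasure (distr M (bernoulli_pmf (prob A)) (\<lambda>x. x \<in> A)) {b}
           = emeasure (bernoulli_pmf (prob A)) {b}"
    using assms
    by (simp add: emeasure_distr emeasure_eq_measure prob_compl measure_pmf.emeasure_eq_measure
                  measure_pmf_single)
qed auto

lemma distr_restrict_Pi_pmf:
  assumes "finite I" "I \<noteq> {}"
  shows "distr (measure_pmf (Pi_pmf I dflt q)) (PiM I (\<lambda>i. measure_pmf (q i))) (\<lambda>f. restrict f I)
       = PiM I (\<lambda>i. measure_pmf (q i))"
proof -
  have "distr (measure_pmf (Pi_pmf I dflt q)) (PiM I (\<lambda>i. measure_pmf (q i))) (\<lambda>f. restrict f I)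
      = distr (measure_pmf (Pi_pmf I dflt q)) (PiM I (\<lambda>_. count_space UNIV)) (\<lambda>f. restrict f I)"
    by (intro distr_cong sets_PiM_cong) auto
  also have "\<dots> = PiM I (\<lambda>i. distr (measure_pmf (Pi_pmf I dflt q)) (count_space UNIV) (\<lambda>f. f i))"
    using indep_vars_Pi_pmf[OF assms(1), of dflt q] assms
    by (subst (asm) prob_space.indep_vars_iff_distr_eq_PiM'[OF measure_pmf.prob_space_axioms])
       (auto simp: restrict_def)
  also have "\<dots> = PiM I (\<lambda>i. measure_pmf (q i))"
    using assms by (intro PiM_cong refl) (simp add: map_pmf_rep_eq[symmetric] Pi_pmf_component)
  finally show ?thesis .
qed

lemma distr_PiM_indicator_bernoulli:
  assumes "prob_space G" "finite I" "A \<in> sets G"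
  defines "B \<equiv> PiM I (\<lambda>_. measure_pmf (bernoulli_pmf (measure G A)))"
  shows "distr (PiM I (\<lambda>_. G)) B (\<lambda>x. \<lambda>i\<in>I. x i \<in> A) = B"
proof -
  interpret G: prob_space G by fact
  have "(\<lambda>x. \<lambda>i\<in>I. x i \<in> A) = compose I (\<lambda>y. y \<in> A)"
    by (auto simp: compose_def)
  then show ?thesis
    unfolding B_def using assms
    by (simp add: distr_PiM_finite_prob_space' measure_pmf.prob_space_axioms G.distr_indicator_bernoulli)
qed

lemma prob_PiM_count_binomial:
  fixes I :: "nat set" \<comment> \<open>\<open>measurable_card\<close> only covers sets of naturals\<close>
  assumes "prob_space G" "finite I" "I \<noteq> {}" "A \<in> sets G"
  shows "measure (PiM I (\<lambda>_. G)) {x \<in> space (PiM I (\<lambda>_. G)). P (card {i\<in>I. x i \<in> A})}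
       = measure_pmf.prob (binomial_pmf (card I) (measure G A)) {z. P z}"
proof -
  interpret G: prob_space G by fact
  define p where "p = measure G A"
  define B where "B = PiM I (\<lambda>_. measure_pmf (bernoulli_pmf p))"
  define Q where "Q = Pi_pmf I False (\<lambda>_. bernoulli_pmf p)"
  define T where "T = (\<lambda>x. \<lambda>i\<in>I. x i \<in> A)"
  define E where "E = {f \<in> space B. P (card {i\<in>I. f i})}"
  have p: "p \<in> {0..1}" unfolding p_def by auto
  have T: "T \<in> PiM I (\<lambda>_. G) \<rightarrow>\<^sub>M B"
    unfolding T_def B_def using assms(4) by measurable
  have "(\<lambda>f. card {i\<in>I. f i}) \<in> B \<rightarrow>\<^sub>M count_space UNIV"
  proof (rule measurable_card)
    fix i
    show "{f \<in> space B. i \<in> {i\<in>I. f i}} \<in> sets B"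
    proof (cases "i \<in> I")
      case True
      then show ?thesis unfolding B_def by measurable
    qed simp
  qed
  then have E: "E \<in> sets B"
    unfolding E_def by measurable
  have "{x \<in> space (PiM I (\<lambda>_. G)). P (card {i\<in>I. x i \<in> A})} = T -` E \<inter> space (PiM I (\<lambda>_. G))"
    using measurable_space[OF T] by (auto simp: E_def T_def cong: conj_cong)
  then have "measure (PiM I (\<lambda>_. G)) {x \<in> space (PiM I (\<lambda>_. G)). P (card {i\<in>I. x i \<in> A})}
      = measure (distr (PiM I (\<lambda>_. G)) B T) E"
    using T E by (simp add: measure_distr)
  \<comment> \<open>The indicator vector has the law of a \<open>Pi_pmf\<close> of Bernoullis, whose count is binomial.\<close>
  also have "distr (PiM I (\<lambda>_. G)) B T = distr Q B (\<lambda>f. restrict f I)"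
    unfolding T_def B_def Q_def p_def
    using distr_PiM_indicator_bernoulli[OF assms(1,2,4)]
      distr_restrict_Pi_pmf[OF assms(2,3), of False "\<lambda>_. bernoulli_pmf (measure G A)"] by simp
  also have "measure \<dots> E = measure Q ((\<lambda>f. card {i\<in>I. f i}) -` {z. P z})"
    using E by (subst measure_distr)
      (auto simp: B_def E_def space_PiM cong: conj_cong intro!: arg_cong[where f="measure Q"])
  also have "\<dots> = measure_pmf.prob (binomial_pmf (card I) p) {z. P z}"
    unfolding Q_def using binomial_pmf_altdef'[OF assms(2) refl p, of False] by simp
  finally show ?thesis unfolding p_def .
qed

lemma mixture_exists:
  assumes F: "real_distribution F" and H: "real_distribution H" and e: "0 \<le> e" "e \<le> 1"
  shows "\<exists>G. is_mixture e F H G"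
proof -
  interpret F: real_distribution F by fact
  interpret H: real_distribution H by fact
  define K where "K = (\<lambda>b. if b then H else F)"
  define G where "G = measure_pmf (bernoulli_pmf e) \<bind> K"
  have K: "K \<in> measure_pmf (bernoulli_pmf e) \<rightarrow>\<^sub>M prob_algebra borel"
    by (auto simp: K_def space_prob_algebra F.prob_space_axioms H.prob_space_axioms)
  have "prob_space G" "sets G = sets borel"
    unfolding G_def using prob_space_bind'[OF _ K] sets_bind'[OF _ K]
    by (auto simp: space_prob_algebra measure_pmf.prob_space_axioms)
  then have "real_distribution G"
    by (simp add: real_distribution_def real_distribution_axioms_def)
  moreover have "measure G A = (1 - e) * measure F A + e * measure H A" if "A \<in> sets borel" for A
  proof -
    have "emeasure G A = (\<integral>\<^sup>+b. emeasure (K b) A \<partial>bernoulli_pmf e)"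
      unfolding G_def using that by (intro emeasure_bind[OF _ measurable_prob_algebraD[OF K]]) auto
    also have "\<dots> = ennreal (measure H A) * e + ennreal (measure F A) * (1 - e)"
      using e by (simp add: K_def F.emeasure_eq_measure H.emeasure_eq_measure)
    also have "\<dots> = ennreal ((1 - e) * measure F A + e * measure H A)"
      using e by (simp add: ennreal_mult mult.commute add.commute)
    finally show ?thesis
      using e by (intro measure_eq_emeasure_eq_ennreal) auto
  qed
  ultimately show ?thesis
    unfolding is_mixture_def by blast
qed

lemma coverage_eq_central_binomial_prob:
  assumes G: "real_distribution G" and n: "n \<ge> 1" and k: "k + 1 \<le> n - k"
  shows "coverage n k theta G = central_binomial_prob n k (measure G {..theta})"
proof -
  interpret G: real_distribution G by fact
  have "order_stat n (k+1) x \<le> theta \<and> theta < order_stat n (n-k) x \<longleftrightarrow>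
        k < card {i\<in>{..<n}. x i \<in> {..theta}} \<and> card {i\<in>{..<n}. x i \<in> {..theta}} < n - k" for x
    using order_stat_le_iff[of "k+1" n x theta] order_stat_le_iff[of "n-k" n x theta] k by auto
  then have "coverage n k theta G
      = measure_pmf.prob (binomial_pmf n (measure G {..theta})) {z. k < z \<and> z < n - k}"
    unfolding coverage_def
    using prob_PiM_count_binomial[OF G.prob_space_axioms, of "{..<n}" "{..theta}" "\<lambda>c. k < c \<and> c < n - k"] n
    by (auto simp: lessThan_empty_iff)
  also have "\<dots> = central_binomial_prob n k (measure G {..theta})"
    by (intro prob_binomial_pmf_central) auto
  finally show ?thesis .
qed

lemma coverage_mixture:
  assumes mix: "is_mixture eps F H G" and med: "cdf F theta = 1/2"
    and n: "n \<ge> 1" and k: "k + 1 \<le> n - k"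
  shows "coverage n k theta G = central_binomial_prob n k ((1 - eps) / 2 + eps * measure H {..theta})"
proof -
  have "measure G {..theta} = (1 - eps) / 2 + eps * measure H {..theta}"
    using mix med unfolding is_mixture_def cdf_def by simp
  moreover have "real_distribution G"
    using mix unfolding is_mixture_def by blast
  ultimately show ?thesis
    using coverage_eq_central_binomial_prob n k by metis
qed

lemma coverage_mixture_ge:
  assumes mix: "is_mixture eps F H G" and H: "real_distribution H" and med: "cdf F theta = 1/2"
    and eps: "0 \<le> eps" "eps \<le> 1" and n: "n \<ge> 1" and k: "k + 1 \<le> n - k"
  shows "central_binomial_prob n k ((1 - eps) / 2) \<le> coverage n k theta G"
proof -
  interpret H: real_distribution H by fact
  have "eps * measure H {..theta} \<le> eps"
    using eps by (intro mult_left_le) auto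
  then show ?thesis
    unfolding coverage_mixture[OF mix med n k] using eps k
    by (intro central_binomial_prob_le) (auto simp: field_simps)
qed

lemma coverage_mixture_one_sided:
  assumes mix: "is_mixture eps F H G" and H: "real_distribution H" and med: "cdf F theta = 1/2"
    and side: "measure H {..theta} = 1 \<or> measure H {theta<..} = 1"
    and n: "n \<ge> 1" and k: "k + 1 \<le> n - k"
  shows "coverage n k theta G = central_binomial_prob n k ((1 - eps) / 2)"
  using side
proof
  assume "measure H {..theta} = 1"
  then have "coverage n k theta G = central_binomial_prob n k (1 - (1 - eps) / 2)"
    unfolding coverage_mixture[OF mix med n k] by (simp add: field_simps)
  then show ?thesis
    by (simp only: central_binomial_prob_reflect)
next
  interpret H: real_distribution H by fact
  assume "measure H {theta<..} = 1"
  moreover have "{..theta} = space H - {theta<..}"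
    by auto
  ultimately have "measure H {..theta} = 0"
    using H.prob_compl[of "{theta<..}"] by simp
  then show ?thesis
    unfolding coverage_mixture[OF mix med n k] by simp
qed

theorem theorem1:
  fixes F :: "real measure" and theta eps :: real and n k :: nat
  assumes F_dist: "real_distribution F"
    and F_cont: "\<And>x. isCont (cdf F) x"
    and med: "cdf F theta = 1/2"
    and med_unique: "\<And>x. cdf F x = 1/2 \<Longrightarrow> x = theta"
    and eps: "0 \<le> eps" "eps < 1/2"
    and n: "n \<ge> 1"
    and k: "k + 1 \<le> n - k"
  shows "(INF G\<in>contam_nbhd eps F. coverage n k theta G) = 1 - alpha_star n k eps \<and>
         (\<forall>H. real_distribution H \<longrightarrow> (measure H {..theta} = 1 \<or> measure H {theta<..} = 1) \<longrightarrow>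
           (\<exists>G. is_mixture eps F H G) \<and>
           (\<forall>G. is_mixture eps F H G \<longrightarrow> coverage n k theta G = 1 - alpha_star n k eps))"
proof -
  define q where "q = (1 - eps) / 2"
  have alpha: "1 - alpha_star n k eps = central_binomial_prob n k q"
    unfolding alpha_star_def q_def using eps by (simp add: prob_binomial_pmf_central)
  have one_sided: "(\<exists>G. is_mixture eps F H G) \<and>
      (\<forall>G. is_mixture eps F H G \<longrightarrow> coverage n k theta G = central_binomial_prob n k q)"
    if "real_distribution H" "measure H {..theta} = 1 \<or> measure H {theta<..} = 1" for H
    using mixture_exists[OF F_dist that(1)] coverage_mixture_one_sided[OF _ that(1) med that(2) n k] eps
    by (auto simp: q_def)
  have point_mass: "real_distribution (return borel theta)" "measure (return borel theta) {..theta} = 1"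
    by (simp_all add: real_distribution_def real_distribution_axioms_def prob_space_return measure_return)
  then obtain G0 where G0: "is_mixture eps F (return borel theta) G0"
    using one_sided by blast
  have "(INF G\<in>contam_nbhd eps F. coverage n k theta G) = central_binomial_prob n k q"
  proof (rule cInf_eq_minimum)
    show "central_binomial_prob n k q \<in> (\<lambda>G. coverage n k theta G) ` contam_nbhd eps F"
      using G0 point_mass one_sided unfolding contam_nbhd_def by force
    show "central_binomial_prob n k q \<le> c" if "c \<in> (\<lambda>G. coverage n k theta G) ` contam_nbhd eps F" for c
      using that coverage_mixture_ge[OF _ _ med _ _ n k] eps unfolding contam_nbhd_def q_def by auto
  qed
  then show ?thesis
    using one_sided alpha by simp
qed

end
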